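(* Let $P$ and $Q$ be two plane posets with $P\leq Q$. Then any path in the (oriented) Hasse graph of the poset $(\mathcal{PP},\leq)$ from $P$ to $Q$ has length $\ell(Q)-\ell(P)$, where $\ell(R)=\sharp\{(x,y)\in R^2\mid x<_r y\}$ is the level of a plane poset $R$.
   Context: A plane poset is a finite set with two partial orders $\leq_h,\leq_r$ such that two distinct elements are $\leq_h$-comparable iff they are not $\leq_r$-comparable; $\mathcal{PP}$ is the set of isomorphism classes of plane posets. On a plane poset, $x\leq y$ iff ($x\leq_h y$ or $x\leq_r y$) is a total order (known fact). For $P,Q$ of equal cardinality, $\theta_{P,Q}$ is the increasing bijection $P\to Q$ and $P\leq Q$ means: for all $x,y\in P$, $\theta_{P,Q}(x)\leq_h\theta_{P,Q}(y)$ in $Q$ implies $x\leq_h y$ in $P$; this is a partial order on each set of plane posets of fixed cardinality (posets of different cardinalities are incomparable). *)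

theory Defs
  imports Main
begin

text \<open>A (finite) plane poset is represented as a triple (A, h, r): a finite carrier
  A of natural numbers with two relations h (the order \<le>_h) and r (the order \<le>_r),
  considered only on A. Every finite plane poset is isomorphic to one of this form.\<close>

type_synonym pp = "nat set \<times> (nat \<Rightarrow> nat \<Rightarrow> bool) \<times> (nat \<Rightarrow> nat \<Rightarrow> bool)"

definition pp_carrier :: "pp \<Rightarrow> nat set" where "pp_carrier P = fst P"
definition pp_h :: "pp \<Rightarrow> nat \<Rightarrow> nat \<Rightarrow> bool" where "pp_h P = fst (snd P)"
definition pp_r :: "pp \<Rightarrow> nat \<Rightarrow> nat \<Rightarrow> bool" where "pp_r P = snd (snd P)"

definition partial_order_rel :: "nat set \<Rightarrow> (nat \<Rightarrow> nat \<Rightarrow> bool) \<Rightarrow> bool" where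
  "partial_order_rel A R \<longleftrightarrow>
     (\<forall>x\<in>A. R x x) \<and>
     (\<forall>x\<in>A. \<forall>y\<in>A. R x y \<and> R y x \<longrightarrow> x = y) \<and>
     (\<forall>x\<in>A. \<forall>y\<in>A. \<forall>z\<in>A. R x y \<and> R y z \<longrightarrow> R x z)"

definition comparable :: "(nat \<Rightarrow> nat \<Rightarrow> bool) \<Rightarrow> nat \<Rightarrow> nat \<Rightarrow> bool" where
  "comparable R x y \<longleftrightarrow> R x y \<or> R y x"

definition plane_poset :: "pp \<Rightarrow> bool" where
  "plane_poset P \<longleftrightarrow> finite (pp_carrier P) \<and>
     partial_order_rel (pp_carrier P) (pp_h P) \<and>
     partial_order_rel (pp_carrier P) (pp_r P) \<and>
     (\<forall>x\<in>pp_carrier P. \<forall>y\<in>pp_carrier P. x \<noteq> y \<longrightarrow>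
        (comparable (pp_h P) x y \<longleftrightarrow> \<not> comparable (pp_r P) x y))"

definition pp_tle :: "pp \<Rightarrow> nat \<Rightarrow> nat \<Rightarrow> bool" where
  "pp_tle P x y \<longleftrightarrow> pp_h P x y \<or> pp_r P x y"

definition pp_iso :: "pp \<Rightarrow> pp \<Rightarrow> bool" where
  "pp_iso P Q \<longleftrightarrow> (\<exists>f. bij_betw f (pp_carrier P) (pp_carrier Q) \<and>
     (\<forall>x\<in>pp_carrier P. \<forall>y\<in>pp_carrier P.
        (pp_h P x y \<longleftrightarrow> pp_h Q (f x) (f y)) \<and> (pp_r P x y \<longleftrightarrow> pp_r Q (f x) (f y))))"

definition pp_theta :: "pp \<Rightarrow> pp \<Rightarrow> nat \<Rightarrow> nat" where
  "pp_theta P Q = (THE f. bij_betw f (pp_carrier P) (pp_carrier Q) \<and>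
     (\<forall>x\<in>pp_carrier P. \<forall>y\<in>pp_carrier P. pp_tle P x y \<longrightarrow> pp_tle Q (f x) (f y)) \<and>
     (\<forall>x. x \<notin> pp_carrier P \<longrightarrow> f x = undefined))"

definition pp_le :: "pp \<Rightarrow> pp \<Rightarrow> bool" where
  "pp_le P Q \<longleftrightarrow> card (pp_carrier P) = card (pp_carrier Q) \<and>
     (\<forall>x\<in>pp_carrier P. \<forall>y\<in>pp_carrier P.
        pp_h Q (pp_theta P Q x) (pp_theta P Q y) \<longrightarrow> pp_h P x y)"

definition pp_less :: "pp \<Rightarrow> pp \<Rightarrow> bool" where
  "pp_less P Q \<longleftrightarrow> pp_le P Q \<and> \<not> pp_iso P Q"

definition pp_hasse_edge :: "pp \<Rightarrow> pp \<Rightarrow> bool" where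
  "pp_hasse_edge P Q \<longleftrightarrow> pp_less P Q \<and>
     \<not> (\<exists>R. plane_poset R \<and> pp_less P R \<and> pp_less R Q)"

text \<open>A path in the Hasse graph from (the class of) P to (the class of) Q, given by
  representatives of its vertices; its length is the number of edges.\<close>
definition pp_hasse_path :: "pp list \<Rightarrow> pp \<Rightarrow> pp \<Rightarrow> bool" where
  "pp_hasse_path ps P Q \<longleftrightarrow> ps \<noteq> [] \<and> (\<forall>R\<in>set ps. plane_poset R) \<and>
     pp_iso (hd ps) P \<and> pp_iso (last ps) Q \<and>
     (\<forall>i. Suc i < length ps \<longrightarrow> pp_hasse_edge (ps ! i) (ps ! Suc i))"

definition pp_level :: "pp \<Rightarrow> nat" where
  "pp_level P = card {(x, y). x \<in> pp_carrier P \<and> y \<in> pp_carrier P \<and> pp_r P x y \<and> x \<noteq> y}"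

end

theory Submission
  imports Defs
begin

text \<open>The relation \<open>P \<le> Q\<close> only moves pairs from \<open><\<^sub>h\<close> to \<open><\<^sub>r\<close>: the increasing bijection
  \<open>\<theta>\<^sub>P\<^sub>,\<^sub>Q\<close> preserves every relation \<open>x <\<^sub>r y\<close>, so it embeds the \<open><\<^sub>r\<close>-pairs of \<open>P\<close> into those
  of \<open>Q\<close>. Hence \<open>\<ell>(P) \<le> \<ell>(Q)\<close>, with equality only when \<open>\<theta>\<^sub>P\<^sub>,\<^sub>Q\<close> is an isomorphism.
  Conversely, if \<open>\<ell>(P) < \<ell>(Q)\<close>, some pair \<open>x <\<^sub>h y\<close> of \<open>P\<close> becomes \<open><\<^sub>r\<close>-related in \<open>Q\<close>; for
  such a pair with the fewest elements between \<open>x\<close> and \<open>y\<close> in the total order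
  \<open>\<le>\<^sub>h \<union> \<ge>\<^sub>r\<close>, moving just \<open>(x, y)\<close> from \<open><\<^sub>h\<close> to \<open><\<^sub>r\<close> gives a plane poset \<open>R\<close> with
  \<open>P \<le> R \<le> Q\<close> and \<open>\<ell>(R) = \<ell>(P) + 1\<close>. So every edge of the Hasse graph raises the level by
  exactly one.\<close>

section \<open>Finite total orders and their increasing bijections\<close>

definition total_order_on :: "'a set \<Rightarrow> ('a \<Rightarrow> 'a \<Rightarrow> bool) \<Rightarrow> bool" where
  "total_order_on A le \<longleftrightarrow> (\<forall>x\<in>A. le x x) \<and> (\<forall>x\<in>A. \<forall>y\<in>A. le x y \<and> le y x \<longrightarrow> x = y) \<and>
     (\<forall>x\<in>A. \<forall>y\<in>A. \<forall>z\<in>A. le x y \<and> le y z \<longrightarrow> le x z) \<and> (\<forall>x\<in>A. \<forall>y\<in>A. le x y \<or> le y x)"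

lemma total_order_on_refl: "total_order_on A le \<Longrightarrow> x \<in> A \<Longrightarrow> le x x"
  unfolding total_order_on_def by blast

lemma total_order_on_antisym:
  "total_order_on A le \<Longrightarrow> x \<in> A \<Longrightarrow> y \<in> A \<Longrightarrow> le x y \<Longrightarrow> le y x \<Longrightarrow> x = y"
  unfolding total_order_on_def by blast

lemma total_order_on_trans:
  "total_order_on A le \<Longrightarrow> x \<in> A \<Longrightarrow> y \<in> A \<Longrightarrow> z \<in> A \<Longrightarrow> le x y \<Longrightarrow> le y z \<Longrightarrow> le x z"
  unfolding total_order_on_def by blast

lemma total_order_on_total: "total_order_on A le \<Longrightarrow> x \<in> A \<Longrightarrow> y \<in> A \<Longrightarrow> le x y \<or> le y x"
  unfolding total_order_on_def by blast

definition rank_in :: "'a set \<Rightarrow> ('a \<Rightarrow> 'a \<Rightarrow> bool) \<Rightarrow> 'a \<Rightarrow> nat" where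
  "rank_in A le u = card {v \<in> A. le v u \<and> v \<noteq> u}"

lemma rank_in_strict_mono:
  assumes "finite A" "total_order_on A le" "u \<in> A" "w \<in> A" "le u w" "u \<noteq> w"
  shows "rank_in A le u < rank_in A le w"
  unfolding rank_in_def
proof (rule psubset_card_mono)
  show "finite {v \<in> A. le v w \<and> v \<noteq> w}" using assms(1) by simp
  have "le v w \<and> v \<noteq> w" if "v \<in> A" "le v u" "v \<noteq> u" for v
    using that assms total_order_on_trans[OF assms(2) that(1) assms(3,4)]
      total_order_on_antisym[OF assms(2) assms(3,4)] by blast
  moreover have "u \<in> {v \<in> A. le v w \<and> v \<noteq> w}" using assms by simp
  ultimately show "{v \<in> A. le v u \<and> v \<noteq> u} \<subset> {v \<in> A. le v w \<and> v \<noteq> w}" by blast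
qed

lemma rank_in_le_iff:
  assumes "finite A" "total_order_on A le" "u \<in> A" "w \<in> A"
  shows "rank_in A le u \<le> rank_in A le w \<longleftrightarrow> le u w"
  using rank_in_strict_mono[OF assms] rank_in_strict_mono[OF assms(1,2,4,3)]
    total_order_on_total[OF assms(2-4)] total_order_on_refl[OF assms(2,3)]
  by (cases "u = w") force+

lemma rank_in_bij:
  assumes "finite A" "total_order_on A le"
  shows "bij_betw (rank_in A le) A {..<card A}"
proof -
  have inj: "inj_on (rank_in A le) A"
    using rank_in_le_iff[OF assms] total_order_on_antisym[OF assms(2)] by (intro inj_onI) force
  have "rank_in A le u < card A" if "u \<in> A" for u
    unfolding rank_in_def using that assms(1) by (intro psubset_card_mono) auto
  then have "rank_in A le ` A \<subseteq> {..<card A}" by auto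
  moreover have "card (rank_in A le ` A) = card {..<card A}" using card_image[OF inj] by simp
  ultimately show ?thesis using inj by (simp add: bij_betw_def card_subset_eq)
qed

lemma mono_bij_reflects_order:
  assumes "total_order_on A le" "total_order_on B le'" "bij_betw f A B"
    and "\<forall>x\<in>A. \<forall>y\<in>A. le x y \<longrightarrow> le' (f x) (f y)"
    and "x \<in> A" "y \<in> A" "le' (f x) (f y)"
  shows "le x y"
proof (rule ccontr)
  assume "\<not> le x y"
  then have "le y x" "x \<noteq> y" using total_order_on_total[OF assms(1) assms(5,6)]
      total_order_on_refl[OF assms(1) assms(5)] by auto
  moreover have "f x \<in> B" "f y \<in> B" using assms(3,5,6) by (auto simp: bij_betw_def)
  ultimately have "f x = f y" using assms(4-7) total_order_on_antisym[OF assms(2)] by blast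
  then show False using \<open>x \<noteq> y\<close> assms(3,5,6) by (auto simp: bij_betw_def dest: inj_onD)
qed

lemma rank_in_mono_bij:
  assumes "total_order_on A le" "total_order_on B le'" "bij_betw f A B"
    and mono: "\<forall>x\<in>A. \<forall>y\<in>A. le x y \<longrightarrow> le' (f x) (f y)" and "u \<in> A"
  shows "rank_in B le' (f u) = rank_in A le u"
proof -
  have inj: "inj_on f A" and img: "f ` A = B" using assms(3) by (auto simp: bij_betw_def)
  have "{w \<in> B. le' w (f u) \<and> w \<noteq> f u} = f ` {v \<in> A. le v u \<and> v \<noteq> u}"
    using mono_bij_reflects_order[OF assms(1-4) _ \<open>u \<in> A\<close>] mono \<open>u \<in> A\<close> img
      inj_on_eq_iff[OF inj] by auto
  then show ?thesis unfolding rank_in_def by (simp add: card_image inj_on_subset[OF inj])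
qed

text \<open>The value \<open>undefined\<close> outside \<open>A\<close> is imposed to match the definition of \<open>pp_theta\<close>.\<close>

definition increasing_bij ::
    "'a set \<Rightarrow> ('a \<Rightarrow> 'a \<Rightarrow> bool) \<Rightarrow> 'b set \<Rightarrow> ('b \<Rightarrow> 'b \<Rightarrow> bool) \<Rightarrow> ('a \<Rightarrow> 'b) \<Rightarrow> bool" where
  "increasing_bij A le B le' f \<longleftrightarrow> bij_betw f A B \<and>
     (\<forall>x\<in>A. \<forall>y\<in>A. le x y \<longrightarrow> le' (f x) (f y)) \<and> (\<forall>x. x \<notin> A \<longrightarrow> f x = undefined)"

lemma increasing_bij_unique:
  assumes "finite B" "total_order_on A le" "total_order_on B le'"
    and "increasing_bij A le B le' f" "increasing_bij A le B le' g"
  shows "f = g"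
proof
  fix u
  show "f u = g u"
  proof (cases "u \<in> A")
    case True
    have "rank_in B le' (f u) = rank_in B le' (g u)"
      using assms(4,5) rank_in_mono_bij[OF assms(2,3) _ _ True]
      unfolding increasing_bij_def by auto
    moreover have "f u \<in> B" "g u \<in> B"
      using assms(4,5) True unfolding increasing_bij_def bij_betw_def by auto
    ultimately show ?thesis using rank_in_bij[OF assms(1,3)] by (auto simp: bij_betw_def dest: inj_onD)
  next
    case False
    then show ?thesis using assms(4,5) unfolding increasing_bij_def by auto
  qed
qed

lemma increasing_bij_exists:
  assumes "finite A" "finite B" "total_order_on A le" "total_order_on B le'" "card A = card B"
  shows "\<exists>f. increasing_bij A le B le' f"
proof -
  let ?g = "inv_into B (rank_in B le')"
  define f where "f u = (if u \<in> A then ?g (rank_in A le u) else undefined)" for u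
  have rA: "bij_betw (rank_in A le) A {..<card B}" using rank_in_bij[OF assms(1,3)] assms(5) by simp
  have rB: "bij_betw (rank_in B le') B {..<card B}" using rank_in_bij[OF assms(2,4)] .
  have "bij_betw (?g \<circ> rank_in A le) A B" using bij_betw_trans[OF rA bij_betw_inv_into[OF rB]] .
  then have bij: "bij_betw f A B" by (rule bij_betw_cong[THEN iffD1, rotated]) (simp add: f_def)
  have rank_f: "rank_in B le' (f u) = rank_in A le u" if "u \<in> A" for u
  proof -
    have "rank_in A le u \<in> rank_in B le' ` B" using rA rB that unfolding bij_betw_def by auto
    then show ?thesis using that by (simp add: f_def f_inv_into_f)
  qed
  have "le' (f x) (f y)" if "x \<in> A" "y \<in> A" "le x y" for x y
  proof -
    have "f x \<in> B" "f y \<in> B" using bij that unfolding bij_betw_def by auto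
    moreover have "rank_in A le x \<le> rank_in A le y" using rank_in_le_iff[OF assms(1,3) that(1,2)] that(3) by simp
    ultimately show ?thesis using rank_in_le_iff[OF assms(2,4)] rank_f that(1,2) by metis
  qed
  then show ?thesis using bij unfolding increasing_bij_def by (intro exI[of _ f]) (auto simp: f_def)
qed

lemma plane_posetD:
  assumes "plane_poset P"
  shows "finite (pp_carrier P)"
    and "\<And>x. x \<in> pp_carrier P \<Longrightarrow> pp_h P x x"
    and "\<And>x y. x \<in> pp_carrier P \<Longrightarrow> y \<in> pp_carrier P \<Longrightarrow> pp_h P x y \<Longrightarrow> pp_h P y x \<Longrightarrow> x = y"
    and "\<And>x y z. x \<in> pp_carrier P \<Longrightarrow> y \<in> pp_carrier P \<Longrightarrow> z \<in> pp_carrier P \<Longrightarrow>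
           pp_h P x y \<Longrightarrow> pp_h P y z \<Longrightarrow> pp_h P x z"
    and "\<And>x. x \<in> pp_carrier P \<Longrightarrow> pp_r P x x"
    and "\<And>x y. x \<in> pp_carrier P \<Longrightarrow> y \<in> pp_carrier P \<Longrightarrow> pp_r P x y \<Longrightarrow> pp_r P y x \<Longrightarrow> x = y"
    and "\<And>x y z. x \<in> pp_carrier P \<Longrightarrow> y \<in> pp_carrier P \<Longrightarrow> z \<in> pp_carrier P \<Longrightarrow>
           pp_r P x y \<Longrightarrow> pp_r P y z \<Longrightarrow> pp_r P x z"
    and "\<And>x y. x \<in> pp_carrier P \<Longrightarrow> y \<in> pp_carrier P \<Longrightarrow> x \<noteq> y \<Longrightarrow>
           (pp_h P x y \<or> pp_h P y x) \<longleftrightarrow> \<not> (pp_r P x y \<or> pp_r P y x)"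
  using assms unfolding plane_poset_def partial_order_rel_def comparable_def by blast+

lemma pp_tle_trans:
  assumes P: "plane_poset P" and xyz: "x \<in> pp_carrier P" "y \<in> pp_carrier P" "z \<in> pp_carrier P"
    and xy: "pp_tle P x y" and yz: "pp_tle P y z"
  shows "pp_tle P x z"
proof (cases "x = y \<or> y = z \<or> x = z")
  case True
  then show ?thesis using xy yz plane_posetD(2)[OF P xyz(1)] by (auto simp: pp_tle_def)
next
  case False
  then have ne: "x \<noteq> y" "y \<noteq> z" "x \<noteq> z" by auto
  note D = plane_posetD[OF P]
  from xy yz consider (hh) "pp_h P x y" "pp_h P y z" | (rr) "pp_r P x y" "pp_r P y z"
    | (hr) "pp_h P x y" "pp_r P y z" | (rh) "pp_r P x y" "pp_h P y z"
    unfolding pp_tle_def by blast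
  then show ?thesis
  proof cases
    case hh
    then show ?thesis using D(4)[OF xyz] by (simp add: pp_tle_def)
  next
    case rr
    then show ?thesis using D(7)[OF xyz] by (simp add: pp_tle_def)
  next
    case hr
    have "\<not> pp_h P z x" using D(4)[OF xyz(3,1,2)] D(8)[OF xyz(2,3) ne(2)] hr by blast
    moreover have "\<not> pp_r P z x" using D(7)[OF xyz(2,3,1)] D(8)[OF xyz(1,2) ne(1)] hr by blast
    ultimately show ?thesis using D(8)[OF xyz(1,3) ne(3)] unfolding pp_tle_def by blast
  next
    case rh
    have "\<not> pp_h P z x" using D(4)[OF xyz(2,3,1)] D(8)[OF xyz(1,2) ne(1)] rh by blast
    moreover have "\<not> pp_r P z x" using D(7)[OF xyz(3,1,2)] D(8)[OF xyz(2,3) ne(2)] rh by blast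
    ultimately show ?thesis using D(8)[OF xyz(1,3) ne(3)] unfolding pp_tle_def by blast
  qed
qed

lemma pp_tle_total_order:
  assumes "plane_poset P"
  shows "total_order_on (pp_carrier P) (pp_tle P)"
  unfolding total_order_on_def
proof (intro conjI ballI impI)
  note D = plane_posetD[OF assms]
  fix x y z
  assume x: "x \<in> pp_carrier P" and y: "y \<in> pp_carrier P" and z: "z \<in> pp_carrier P"
  show "pp_tle P x x" using D(2)[OF x] by (simp add: pp_tle_def)
  show "pp_tle P x y \<or> pp_tle P y x" using D(2)[OF x] D(8)[OF x y] unfolding pp_tle_def by blast
  show "x = y" if "pp_tle P x y \<and> pp_tle P y x"
    using that D(3)[OF x y] D(6)[OF x y] D(8)[OF x y] unfolding pp_tle_def by blast
  show "pp_tle P x z" if "pp_tle P x y \<and> pp_tle P y z"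
    using that pp_tle_trans[OF assms x y z] by blast
qed

definition pp_dual :: "pp \<Rightarrow> pp" where
  "pp_dual P = (pp_carrier P, pp_h P, \<lambda>u v. pp_r P v u)"

lemma pp_dual_simps [simp]:
  "pp_carrier (pp_dual P) = pp_carrier P" "pp_h (pp_dual P) = pp_h P"
  "pp_r (pp_dual P) = (\<lambda>u v. pp_r P v u)"
  by (simp_all add: pp_dual_def pp_carrier_def pp_h_def pp_r_def)

lemma pp_tle_dual: "pp_tle (pp_dual P) u v \<longleftrightarrow> pp_h P u v \<or> pp_r P v u"
  by (simp add: pp_tle_def)

lemma plane_poset_dual:
  assumes "plane_poset P"
  shows "plane_poset (pp_dual P)"
proof -
  have "partial_order_rel (pp_carrier P) (\<lambda>u v. pp_r P v u)"
    using assms unfolding plane_poset_def partial_order_rel_def by blast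
  moreover have "comparable (\<lambda>u v. pp_r P v u) = comparable (pp_r P)"
    by (auto simp: comparable_def fun_eq_iff)
  ultimately show ?thesis using assms unfolding plane_poset_def by simp
qed

lemma pp_theta_eqI:
  assumes "plane_poset P" "plane_poset Q"
    and "increasing_bij (pp_carrier P) (pp_tle P) (pp_carrier Q) (pp_tle Q) f"
  shows "pp_theta P Q = f"
  unfolding pp_theta_def increasing_bij_def[symmetric]
  using assms(3) increasing_bij_unique[OF plane_posetD(1)[OF assms(2)]
      pp_tle_total_order[OF assms(1)] pp_tle_total_order[OF assms(2)] _ assms(3)]
  by blast

lemma pp_theta_increasing_bij:
  assumes "plane_poset P" "plane_poset Q" "card (pp_carrier P) = card (pp_carrier Q)"
  shows "increasing_bij (pp_carrier P) (pp_tle P) (pp_carrier Q) (pp_tle Q) (pp_theta P Q)"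
  using increasing_bij_exists[OF plane_posetD(1)[OF assms(1)] plane_posetD(1)[OF assms(2)]
      pp_tle_total_order[OF assms(1)] pp_tle_total_order[OF assms(2)] assms(3)]
    pp_theta_eqI[OF assms(1,2)] by blast

definition pp_r_pairs :: "pp \<Rightarrow> (nat \<times> nat) set" where
  "pp_r_pairs P = {(x, y). x \<in> pp_carrier P \<and> y \<in> pp_carrier P \<and> pp_r P x y \<and> x \<noteq> y}"

lemma pp_level_eq_card: "pp_level P = card (pp_r_pairs P)"
  by (simp add: pp_level_def pp_r_pairs_def)

lemma finite_pp_r_pairs: "plane_poset P \<Longrightarrow> finite (pp_r_pairs P)"
  by (rule finite_subset[of _ "pp_carrier P \<times> pp_carrier P"])
     (auto simp: pp_r_pairs_def dest: plane_posetD(1))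

lemma pp_level_iso:
  assumes "pp_iso P Q"
  shows "pp_level P = pp_level Q"
proof -
  obtain f where bij: "bij_betw f (pp_carrier P) (pp_carrier Q)"
    and r: "\<forall>x\<in>pp_carrier P. \<forall>y\<in>pp_carrier P. pp_r P x y \<longleftrightarrow> pp_r Q (f x) (f y)"
    using assms unfolding pp_iso_def by blast
  have inj: "inj_on f (pp_carrier P)" and img: "f ` pp_carrier P = pp_carrier Q"
    using bij by (auto simp: bij_betw_def)
  have "map_prod f f ` pp_r_pairs P = pp_r_pairs Q"
  proof
    show "map_prod f f ` pp_r_pairs P \<subseteq> pp_r_pairs Q"
      using r img inj by (auto simp: pp_r_pairs_def dest: inj_onD)
    show "pp_r_pairs Q \<subseteq> map_prod f f ` pp_r_pairs P"
    proof
      fix p assume "p \<in> pp_r_pairs Q"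
      then obtain a b where p: "p = (a, b)" "a \<in> pp_carrier Q" "b \<in> pp_carrier Q"
        "pp_r Q a b" "a \<noteq> b"
        unfolding pp_r_pairs_def by blast
      then obtain u v where uv: "u \<in> pp_carrier P" "v \<in> pp_carrier P" "a = f u" "b = f v"
        using img by blast
      then have "(u, v) \<in> pp_r_pairs P" using r p by (auto simp: pp_r_pairs_def)
      then show "p \<in> map_prod f f ` pp_r_pairs P" using p uv by (auto intro!: image_eqI)
    qed
  qed
  moreover have "inj_on (map_prod f f) (pp_r_pairs P)"
    using inj by (auto simp: pp_r_pairs_def inj_on_def)
  ultimately show ?thesis unfolding pp_level_eq_card by (metis card_image)
qed

locale plane_poset_le =
  fixes P Q :: pp
  assumes plane_P: "plane_poset P" and plane_Q: "plane_poset Q" and le: "pp_le P Q"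
begin

abbreviation "A \<equiv> pp_carrier P"
abbreviation "B \<equiv> pp_carrier Q"
abbreviation "hP \<equiv> pp_h P"
abbreviation "rP \<equiv> pp_r P"
abbreviation "hQ \<equiv> pp_h Q"
abbreviation "rQ \<equiv> pp_r Q"
abbreviation "\<theta> \<equiv> pp_theta P Q"

lemmas DP = plane_posetD[OF plane_P]
lemmas DQ = plane_posetD[OF plane_Q]

lemma card_eq: "card A = card B"
  using le by (simp add: pp_le_def)

lemma h_reflect: "x \<in> A \<Longrightarrow> y \<in> A \<Longrightarrow> hQ (\<theta> x) (\<theta> y) \<Longrightarrow> hP x y"
  using le by (simp add: pp_le_def)

lemma theta_increasing: "increasing_bij A (pp_tle P) B (pp_tle Q) \<theta>"
  using pp_theta_increasing_bij[OF plane_P plane_Q card_eq] .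

lemma theta_bij: "bij_betw \<theta> A B"
  using theta_increasing by (simp add: increasing_bij_def)

lemma theta_in: "x \<in> A \<Longrightarrow> \<theta> x \<in> B"
  using theta_bij by (auto simp: bij_betw_def)

lemma theta_eq_iff: "x \<in> A \<Longrightarrow> y \<in> A \<Longrightarrow> \<theta> x = \<theta> y \<longleftrightarrow> x = y"
  using theta_bij by (auto simp: bij_betw_def dest: inj_onD)

lemma theta_image: "\<theta> ` A = B"
  using theta_bij by (simp add: bij_betw_def)

lemma theta_tle: "x \<in> A \<Longrightarrow> y \<in> A \<Longrightarrow> pp_tle P x y \<Longrightarrow> pp_tle Q (\<theta> x) (\<theta> y)"
  using theta_increasing by (simp add: increasing_bij_def)

lemma theta_r:
  assumes "x \<in> A" "y \<in> A" "x \<noteq> y" "rP x y"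
  shows "rQ (\<theta> x) (\<theta> y)"
proof -
  have "\<not> hQ (\<theta> x) (\<theta> y)" using h_reflect DP(8)[OF assms(1-3)] assms by blast
  then show ?thesis using theta_tle[OF assms(1,2)] assms(4) by (simp add: pp_tle_def)
qed

lemma theta_r_pairs: "map_prod \<theta> \<theta> ` pp_r_pairs P \<subseteq> pp_r_pairs Q"
  using theta_r theta_in theta_eq_iff by (auto simp: pp_r_pairs_def)

lemma inj_on_theta_r_pairs: "inj_on (map_prod \<theta> \<theta>) (pp_r_pairs P)"
  using theta_eq_iff by (auto simp: pp_r_pairs_def inj_on_def)

lemma level_mono: "pp_level P \<le> pp_level Q"
  unfolding pp_level_eq_card
  using card_inj_on_le[OF inj_on_theta_r_pairs theta_r_pairs finite_pp_r_pairs[OF plane_Q]] .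

text \<open>If no pair moves from \<open><\<^sub>h\<close> to \<open><\<^sub>r\<close>, then \<open>\<theta>\<close> also reflects \<open>\<le>\<^sub>r\<close>, and since
  it preserves the total order it must then preserve \<open>\<le>\<^sub>h\<close> as well.\<close>

lemma iso_if_level_eq:
  assumes "pp_level P = pp_level Q"
  shows "pp_iso P Q"
proof -
  have eq: "map_prod \<theta> \<theta> ` pp_r_pairs P = pp_r_pairs Q"
    using card_subset_eq[OF finite_pp_r_pairs[OF plane_Q] theta_r_pairs] assms
      card_image[OF inj_on_theta_r_pairs] unfolding pp_level_eq_card by simp
  have r_reflect: "rP x y" if "x \<in> A" "y \<in> A" "x \<noteq> y" "rQ (\<theta> x) (\<theta> y)" for x y
  proof -
    have "(\<theta> x, \<theta> y) \<in> pp_r_pairs Q" using that theta_in theta_eq_iff by (auto simp: pp_r_pairs_def)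
    then obtain u v where "(u, v) \<in> pp_r_pairs P" "\<theta> u = \<theta> x" "\<theta> v = \<theta> y" using eq by force
    then show ?thesis using theta_eq_iff that by (auto simp: pp_r_pairs_def)
  qed
  have h_pres: "hQ (\<theta> x) (\<theta> y)" if "x \<in> A" "y \<in> A" "x \<noteq> y" "hP x y" for x y
  proof -
    have "\<not> rQ (\<theta> x) (\<theta> y)" "\<not> rQ (\<theta> y) (\<theta> x)"
      using r_reflect that DP(8)[OF that(1-3)] by auto
    moreover have "\<not> hQ (\<theta> y) (\<theta> x)" using h_reflect that DP(3) by blast
    ultimately show ?thesis
      using DQ(8)[OF theta_in theta_in] that theta_eq_iff by blast
  qed
  have "(hP x y \<longleftrightarrow> hQ (\<theta> x) (\<theta> y)) \<and> (rP x y \<longleftrightarrow> rQ (\<theta> x) (\<theta> y))" if "x \<in> A" "y \<in> A" for x y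
  proof (cases "x = y")
    case True
    then show ?thesis using that DP(2,5) DQ(2,5) theta_in by simp
  next
    case False
    then show ?thesis using that h_reflect h_pres r_reflect theta_r by blast
  qed
  then show ?thesis unfolding pp_iso_def using theta_bij by blast
qed

end

lemma pp_less_level_less:
  assumes "plane_poset P" "plane_poset Q" "pp_less P Q"
  shows "pp_level P < pp_level Q"
proof -
  interpret plane_poset_le P Q using assms by unfold_locales (auto simp: pp_less_def)
  show ?thesis using level_mono iso_if_level_eq assms(3) unfolding pp_less_def by fastforce
qed

section \<open>Covers raise the level by one\<close>

definition between_card :: "'a set \<Rightarrow> ('a \<Rightarrow> 'a \<Rightarrow> bool) \<Rightarrow> 'a \<Rightarrow> 'a \<Rightarrow> nat" where
  "between_card A le x y = card {w \<in> A. w \<noteq> x \<and> w \<noteq> y \<and> le x w \<and> le w y}"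

lemma between_card_less:
  assumes "finite A" "total_order_on A le" "x \<in> A" "y \<in> A" "z \<in> A" "z \<noteq> x" "z \<noteq> y"
    and "le x z" "le z y"
  shows "between_card A le x z < between_card A le x y"
    and "between_card A le z y < between_card A le x y"
proof -
  note trans = total_order_on_trans[OF assms(2)] and antisym = total_order_on_antisym[OF assms(2)]
  let ?S = "{w \<in> A. w \<noteq> x \<and> w \<noteq> y \<and> le x w \<and> le w y}"
  have "z \<in> ?S" using assms by simp
  have "w \<in> ?S" if "w \<in> A" "w \<noteq> x" "w \<noteq> z" "le x w" "le w z" for w
  proof -
    have "le w y" using trans[OF that(1) assms(5,4) that(5) assms(9)] .
    moreover have "w \<noteq> y" using that(3,5) antisym[OF assms(5,4) assms(9)] by auto
    ultimately show ?thesis using that by simp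
  qed
  with \<open>z \<in> ?S\<close> have "{w \<in> A. w \<noteq> x \<and> w \<noteq> z \<and> le x w \<and> le w z} \<subset> ?S" by blast
  then show "between_card A le x z < between_card A le x y"
    unfolding between_card_def using assms(1) by (intro psubset_card_mono) auto
  have "w \<in> ?S" if "w \<in> A" "w \<noteq> z" "w \<noteq> y" "le z w" "le w y" for w
  proof -
    have "le x w" using trans[OF assms(3,5) that(1) assms(8) that(4)] .
    moreover have "w \<noteq> x" using that(2,4) antisym[OF assms(3,5) assms(8)] by auto
    ultimately show ?thesis using that by simp
  qed
  with \<open>z \<in> ?S\<close> have "{w \<in> A. w \<noteq> z \<and> w \<noteq> y \<and> le z w \<and> le w y} \<subset> ?S" by blast
  then show "between_card A le z y < between_card A le x y"
    unfolding between_card_def using assms(1) by (intro psubset_card_mono) auto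
qed

definition pp_flip :: "pp \<Rightarrow> nat \<Rightarrow> nat \<Rightarrow> pp" where
  "pp_flip P x y =
     (pp_carrier P, \<lambda>u v. pp_h P u v \<and> (u, v) \<noteq> (x, y), \<lambda>u v. pp_r P u v \<or> (u, v) = (x, y))"

lemma pp_flip_simps [simp]:
  "pp_carrier (pp_flip P x y) = pp_carrier P"
  "pp_h (pp_flip P x y) = (\<lambda>u v. pp_h P u v \<and> (u, v) \<noteq> (x, y))"
  "pp_r (pp_flip P x y) = (\<lambda>u v. pp_r P u v \<or> (u, v) = (x, y))"
  by (simp_all add: pp_flip_def pp_carrier_def pp_h_def pp_r_def)

lemma pp_tle_flip: "pp_h P x y \<Longrightarrow> pp_tle (pp_flip P x y) = pp_tle P"
  by (auto simp: pp_tle_def fun_eq_iff)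

text \<open>The flip stays a plane poset when nothing lies strictly between \<open>x\<close> and \<open>y\<close> in the
  total order of the dual plane poset: elements there are exactly those that would break
  transitivity of the new orders.\<close>

locale flippable_pair =
  fixes P :: pp and x y :: nat
  assumes plane: "plane_poset P"
    and x: "x \<in> pp_carrier P" and y: "y \<in> pp_carrier P" and x_ne_y: "x \<noteq> y"
    and h_xy: "pp_h P x y"
    and nothing_between: "\<And>z. z \<in> pp_carrier P \<Longrightarrow> z \<noteq> x \<Longrightarrow> z \<noteq> y \<Longrightarrow>
      \<not> (pp_tle (pp_dual P) x z \<and> pp_tle (pp_dual P) z y)"
begin

abbreviation "A \<equiv> pp_carrier P"
abbreviation "h \<equiv> pp_h P"
abbreviation "r \<equiv> pp_r P"

lemmas D = plane_posetD[OF plane]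

lemma not_r_xy: "\<not> r x y" "\<not> r y x"
  using D(8)[OF x y x_ne_y] h_xy by auto

lemma no_h_between: "z \<in> A \<Longrightarrow> z \<noteq> x \<Longrightarrow> z \<noteq> y \<Longrightarrow> \<not> (h x z \<and> h z y)"
  using nothing_between by (auto simp: pp_tle_dual)

lemma r_after_y: assumes "c \<in> A" "c \<noteq> y" "r y c" shows "r x c"
proof -
  have "c \<noteq> x" using assms(3) not_r_xy by auto
  have "\<not> h x c" using nothing_between[OF assms(1) \<open>c \<noteq> x\<close> assms(2)] assms(3) by (simp add: pp_tle_dual)
  moreover have "\<not> h c x"
    using D(4)[OF assms(1) x y _ h_xy] D(8)[OF y assms(1) assms(2)[symmetric]] assms(3) by blast
  moreover have "\<not> r c x" using D(7)[OF y assms(1) x] assms(3) not_r_xy by blast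
  ultimately show ?thesis using D(8)[OF x assms(1) \<open>c \<noteq> x\<close>[symmetric]] by blast
qed

lemma r_before_x: assumes "a \<in> A" "a \<noteq> x" "r a x" shows "r a y"
proof -
  have "a \<noteq> y" using assms(3) not_r_xy by auto
  have "\<not> h a y" using nothing_between[OF assms(1,2) \<open>a \<noteq> y\<close>] assms(3) by (simp add: pp_tle_dual)
  moreover have "\<not> h y a"
    using D(4)[OF x y assms(1) h_xy] D(8)[OF assms(1) x assms(2)] assms(3) by blast
  moreover have "\<not> r y a" using D(7)[OF y assms(1) x] assms(3) not_r_xy by blast
  ultimately show ?thesis using D(8)[OF assms(1) y \<open>a \<noteq> y\<close>] by blast
qed

lemma plane_poset_flip: "plane_poset (pp_flip P x y)"
  unfolding plane_poset_def partial_order_rel_def comparable_def pp_flip_simps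
proof (intro conjI ballI impI allI)
  show "finite A" using D(1) .
  fix a b c assume a: "a \<in> A" and b: "b \<in> A" and c: "c \<in> A"
  show "h a a" "(a, a) \<noteq> (x, y)" "r a a \<or> (a, a) = (x, y)" using D(2,5)[OF a] x_ne_y by auto
  show "a = b" if "(h a b \<and> (a, b) \<noteq> (x, y)) \<and> h b a \<and> (b, a) \<noteq> (x, y)"
    using that D(3)[OF a b] by blast
  show "a = b" if "(r a b \<or> (a, b) = (x, y)) \<and> (r b a \<or> (b, a) = (x, y))"
    using that D(6)[OF a b] not_r_xy by auto
  show "h a c" if "(h a b \<and> (a, b) \<noteq> (x, y)) \<and> h b c \<and> (b, c) \<noteq> (x, y)"
    using that D(4)[OF a b c] by blast
  show "(a, c) \<noteq> (x, y)" if "(h a b \<and> (a, b) \<noteq> (x, y)) \<and> h b c \<and> (b, c) \<noteq> (x, y)"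
    using that no_h_between[OF b] by auto
  show "r a c \<or> (a, c) = (x, y)" if "(r a b \<or> (a, b) = (x, y)) \<and> (r b c \<or> (b, c) = (x, y))"
    using that D(7)[OF a b c] r_after_y[OF c] r_before_x[OF a] by auto
  show "(h a b \<and> (a, b) \<noteq> (x, y) \<or> h b a \<and> (b, a) \<noteq> (x, y)) \<longleftrightarrow>
      \<not> ((r a b \<or> (a, b) = (x, y)) \<or> r b a \<or> (b, a) = (x, y))" if "a \<noteq> b"
    using D(8)[OF a b that] D(3)[OF x y] h_xy x_ne_y by auto
qed

lemma level_flip: "pp_level (pp_flip P x y) = Suc (pp_level P)"
proof -
  have "pp_r_pairs (pp_flip P x y) = insert (x, y) (pp_r_pairs P)"
    using x y x_ne_y by (auto simp: pp_r_pairs_def)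
  moreover have "(x, y) \<notin> pp_r_pairs P" using not_r_xy by (simp add: pp_r_pairs_def)
  ultimately show ?thesis unfolding pp_level_eq_card using finite_pp_r_pairs[OF plane] by simp
qed

end

context plane_poset_le
begin

definition lost_h_pairs :: "(nat \<times> nat) set" where
  "lost_h_pairs = {(x, y). x \<in> A \<and> y \<in> A \<and> x \<noteq> y \<and> hP x y \<and> \<not> hQ (\<theta> x) (\<theta> y)}"

lemma lost_h_pairs_nonempty:
  assumes "pp_level P < pp_level Q"
  shows "lost_h_pairs \<noteq> {}"
proof
  assume none_lost: "lost_h_pairs = {}"
  have "pp_r_pairs Q \<subseteq> map_prod \<theta> \<theta> ` pp_r_pairs P"
  proof
    fix p assume "p \<in> pp_r_pairs Q"
    then obtain a b where p: "p = (a, b)" "a \<in> B" "b \<in> B" "rQ a b" "a \<noteq> b"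
      unfolding pp_r_pairs_def by blast
    then obtain u v where uv: "u \<in> A" "v \<in> A" "a = \<theta> u" "b = \<theta> v" using theta_image by blast
    have "u \<noteq> v" using uv p by auto
    have "\<not> hP u v" "\<not> hP v u"
      using none_lost uv p \<open>u \<noteq> v\<close> DQ(8)[OF p(2,3,5)] unfolding lost_h_pairs_def by blast+
    moreover have "\<not> rP v u" using theta_r[OF uv(2,1)] \<open>u \<noteq> v\<close> DQ(6)[OF p(2,3)] p uv by blast
    ultimately have "(u, v) \<in> pp_r_pairs P"
      using DP(8)[OF uv(1,2) \<open>u \<noteq> v\<close>] uv \<open>u \<noteq> v\<close> by (auto simp: pp_r_pairs_def)
    then show "p \<in> map_prod \<theta> \<theta> ` pp_r_pairs P" using p uv by (auto intro!: image_eqI)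
  qed
  then have "card (pp_r_pairs Q) \<le> card (pp_r_pairs P)"
    using card_mono[OF finite_imageI[OF finite_pp_r_pairs[OF plane_P]]]
      card_image_le[OF finite_pp_r_pairs[OF plane_P]] le_trans by blast
  then show False using assms unfolding pp_level_eq_card by simp
qed

text \<open>A lost pair with fewest elements between its ends cannot have a third element in between:
  that element would form a shorter pair, which is not lost, and the relations of the
  two shorter pairs in \<open>Q\<close> would contradict \<open>(x, y)\<close> being lost.\<close>

lemma flippable_if_minimal_lost:
  assumes lost: "(x, y) \<in> lost_h_pairs"
    and minimal: "\<And>a b. (a, b) \<in> lost_h_pairs \<Longrightarrow>
      between_card A (pp_tle (pp_dual P)) x y \<le> between_card A (pp_tle (pp_dual P)) a b"
  shows "flippable_pair P x y"
proof
  let ?le = "pp_tle (pp_dual P)"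
  have x: "x \<in> A" and y: "y \<in> A" and "x \<noteq> y" and h_xy: "hP x y" and not_hQ: "\<not> hQ (\<theta> x) (\<theta> y)"
    using lost unfolding lost_h_pairs_def by auto
  have rQ_xy: "rQ (\<theta> x) (\<theta> y)" using theta_tle[OF x y] h_xy not_hQ by (simp add: pp_tle_def)
  have order: "total_order_on A ?le"
    using pp_tle_total_order[OF plane_poset_dual[OF plane_P]] by simp
  fix z assume z: "z \<in> A" "z \<noteq> x" "z \<noteq> y"
  show "\<not> (?le x z \<and> ?le z y)"
  proof
    assume between: "?le x z \<and> ?le z y"
    note shorter = between_card_less[OF DP(1) order x y z] between
    have kept: "hQ (\<theta> a) (\<theta> b)"
      if "a \<in> A" "b \<in> A" "a \<noteq> b" "hP a b" "between_card A ?le a b < between_card A ?le x y" for a b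
      using minimal[of a b] that unfolding lost_h_pairs_def by fastforce
    from between consider "hP x z" "hP z y" | "rP z x" "hP z y" | "hP x z" "rP y z" | "rP z x" "rP y z"
      by (auto simp: pp_tle_dual)
    then show False
    proof cases
      case 1
      then show False using kept[OF x z(1)] kept[OF z(1) y] shorter z
          DQ(4)[OF theta_in[OF x] theta_in[OF z(1)] theta_in[OF y]] not_hQ by auto
    next
      case 2
      then have "hQ (\<theta> z) (\<theta> y)" "rQ (\<theta> z) (\<theta> y)"
        using kept[OF z(1) y] shorter z theta_r[OF z(1) x] rQ_xy
          DQ(7)[OF theta_in[OF z(1)] theta_in[OF x] theta_in[OF y]] by auto
      then show False using DQ(8)[OF theta_in[OF z(1)] theta_in[OF y]] theta_eq_iff z y by blast
    next
      case 3
      then have "hQ (\<theta> x) (\<theta> z)" "rQ (\<theta> x) (\<theta> z)"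
        using kept[OF x z(1)] shorter z theta_r[OF y z(1)] rQ_xy
          DQ(7)[OF theta_in[OF x] theta_in[OF y] theta_in[OF z(1)]] by auto
      then show False using DQ(8)[OF theta_in[OF x] theta_in[OF z(1)]] theta_eq_iff z x by blast
    next
      case 4
      then show False using DP(7)[OF y z(1) x] DP(8)[OF x y \<open>x \<noteq> y\<close>] h_xy by blast
    qed
  qed
qed (use lost plane_P in \<open>auto simp: lost_h_pairs_def\<close>)

lemma flip_between:
  assumes "(x, y) \<in> lost_h_pairs" "flippable_pair P x y"
  shows "pp_le P (pp_flip P x y)" and "pp_le (pp_flip P x y) Q"
proof -
  have tle: "pp_tle (pp_flip P x y) = pp_tle P"
    using pp_tle_flip assms(1) by (simp add: lost_h_pairs_def)
  have "pp_theta P (pp_flip P x y) = (\<lambda>u. if u \<in> A then u else undefined)"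
    by (rule pp_theta_eqI[OF plane_P flippable_pair.plane_poset_flip[OF assms(2)]])
       (auto simp: increasing_bij_def tle bij_betw_def inj_on_def)
  then show "pp_le P (pp_flip P x y)" by (simp add: pp_le_def)
  have "pp_theta (pp_flip P x y) Q = \<theta>" by (simp add: pp_theta_def tle)
  then show "pp_le (pp_flip P x y) Q"
    using card_eq h_reflect assms(1) by (auto simp: pp_le_def lost_h_pairs_def)
qed

lemma exists_between_level_succ:
  assumes "pp_level P < pp_level Q"
  shows "\<exists>R. plane_poset R \<and> pp_le P R \<and> pp_le R Q \<and> pp_level R = Suc (pp_level P)"
proof -
  let ?gap = "between_card A (pp_tle (pp_dual P))"
  obtain p where p: "p \<in> lost_h_pairs" "\<And>q. q \<in> lost_h_pairs \<Longrightarrow> case_prod ?gap p \<le> case_prod ?gap q"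
    using ex_has_least_nat[of "\<lambda>q. q \<in> lost_h_pairs" _ "case_prod ?gap"]
      lost_h_pairs_nonempty[OF assms] by blast
  obtain x y where xy: "p = (x, y)" by (cases p)
  have lost: "(x, y) \<in> lost_h_pairs" using p(1) xy by simp
  have "?gap x y \<le> ?gap a b" if "(a, b) \<in> lost_h_pairs" for a b
    using p(2)[OF that] xy by simp
  then have flippable: "flippable_pair P x y" by (rule flippable_if_minimal_lost[OF lost])
  show ?thesis
    using flip_between[OF lost flippable] flippable_pair.plane_poset_flip[OF flippable]
      flippable_pair.level_flip[OF flippable] by blast
qed

end

lemma pp_hasse_edge_level:
  assumes "plane_poset P" "plane_poset Q" "pp_hasse_edge P Q"
  shows "pp_level Q = Suc (pp_level P)"
proof (rule ccontr)
  assume not_succ: "pp_level Q \<noteq> Suc (pp_level P)"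
  have less: "pp_less P Q" using assms(3) by (simp add: pp_hasse_edge_def)
  interpret plane_poset_le P Q using assms less by unfold_locales (auto simp: pp_less_def)
  obtain R where R: "plane_poset R" "pp_le P R" "pp_le R Q" "pp_level R = Suc (pp_level P)"
    using exists_between_level_succ pp_less_level_less[OF assms(1,2) less] by blast
  then have "pp_less P R" "pp_less R Q"
    using pp_level_iso[of P R] pp_level_iso[of R Q] not_succ by (auto simp: pp_less_def)
  then show False using assms(3) R(1) unfolding pp_hasse_edge_def by blast
qed

theorem proposition27:
  assumes "plane_poset P" and "plane_poset Q" and "pp_le P Q"
    and "pp_hasse_path ps P Q"
  shows "int (length ps - 1) = int (pp_level Q) - int (pp_level P)"
proof -
  have "ps \<noteq> []" and plane: "\<forall>R\<in>set ps. plane_poset R"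
    and "pp_iso (hd ps) P" "pp_iso (last ps) Q"
    and edge: "\<forall>i. Suc i < length ps \<longrightarrow> pp_hasse_edge (ps ! i) (ps ! Suc i)"
    using assms(4) unfolding pp_hasse_path_def by auto
  have level_nth: "pp_level (ps ! i) = pp_level (ps ! 0) + i" if "i < length ps" for i
    using that
  proof (induction i)
    case (Suc i)
    have "pp_level (ps ! Suc i) = Suc (pp_level (ps ! i))"
      using pp_hasse_edge_level[of "ps ! i" "ps ! Suc i"] plane edge Suc.prems by simp
    then show ?case using Suc by simp
  qed simp
  have "pp_level (last ps) = pp_level (hd ps) + (length ps - 1)"
    using level_nth[of "length ps - 1"] \<open>ps \<noteq> []\<close> by (simp add: last_conv_nth hd_conv_nth)
  moreover have "pp_level (hd ps) = pp_level P" "pp_level (last ps) = pp_level Q"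
    using pp_level_iso[OF \<open>pp_iso (hd ps) P\<close>] pp_level_iso[OF \<open>pp_iso (last ps) Q\<close>] by auto
  ultimately show ?thesis by simp
qed

end
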